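(* Let $V=\{v_0,\dots,v_{L-1}\}$ be a set of $L\ge1$ boolean variables and let $n_0,\dots,n_t$ ($t\ge1$) be a sequence of nodes, node $n_j$ carrying a state $s_j:V\to\{0,1\}$. Let $n^c=n_t$ (child) with state $s^c=s_t$ and $n^p=n_k$ (parent) for some $k\in\{0,\dots,t-1\}$, and suppose the states of $n^p$ and $n^c$ differ in exactly $e$ variables. For a node $n=n_m$ in the sequence define $\alpha_{0:t}(n)=\frac{1}{t}\sum_{i\in\{0,\dots,t\},i\ne m}\delta(n,n_i)$ with $\delta(n_m,n_i)=\frac1L\sum_{l=0}^{L-1}\mathbf{1}_{s_m(v_l)\neq s_i(v_l)}$. Let $\mu_{t-1}^{min}(n^c)=\min_{0\le l\le L-1}\frac{1}{t}|\{j\in\{0,\dots,t-1\}\mid s_j(v_l)=s^c(v_l)\}|$. If $\mu_{t-1}^{min}(n^c)=0$, then $$\alpha_{0:t}(n^c)\ge\alpha_{0:t}(n^p)-\frac{t-1}{t}\,\frac{e-2}{L}.$$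
   Context: $\delta$ is the normalized Hamming distance between node states; $\alpha_{0:t}(n)$ is the average normalized Hamming distance of a node of the sequence to all other nodes. The hypothesis $\mu_{t-1}^{min}(n^c)=0$ means that some variable takes in the child's state a value never observed among the states of $n_0,\dots,n_{t-1}$. *)

theory Defs
  imports Complex_Main
begin

text \<open>States: s j l is the value of variable v_l in the state of node n_j
  (j = 0..t, l = 0..L-1).\<close>

definition delta :: "nat \<Rightarrow> (nat \<Rightarrow> nat \<Rightarrow> bool) \<Rightarrow> nat \<Rightarrow> nat \<Rightarrow> real" where
  "delta L s m i = (1 / real L) * (\<Sum>l<L. if s m l \<noteq> s i l then 1 else 0)"

definition alpha :: "nat \<Rightarrow> nat \<Rightarrow> (nat \<Rightarrow> nat \<Rightarrow> bool) \<Rightarrow> nat \<Rightarrow> real" where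
  "alpha L t s m = (1 / real t) * (\<Sum>i\<in>{0..t} - {m}. delta L s m i)"

definition mu_min :: "nat \<Rightarrow> nat \<Rightarrow> (nat \<Rightarrow> nat \<Rightarrow> bool) \<Rightarrow> real" where
  "mu_min L t s = Min ((\<lambda>l. (1 / real t) * real (card {j\<in>{0..<t}. s j l = s t l})) ` {0..<L})"

end

theory Submission
  imports Defs
begin

text \<open>Let \<open>v\<^sub>l\<close> be a variable on which every earlier node disagrees with the child.
  Being boolean, the parent and any other earlier node \<open>n\<^sub>i\<close> then agree at \<open>v\<^sub>l\<close>, while
  both differ there from the child, so the triangle inequality through the child loses 2:
  \<open>d(n\<^sup>p, n\<^sub>i) \<le> d(n\<^sup>p, n\<^sup>c) + d(n\<^sup>c, n\<^sub>i) - 2\<close> (Hamming distances as counts).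
  Summing over the \<open>t - 1\<close> nodes other than parent and child compares the two averages.\<close>

definition hamming :: "nat \<Rightarrow> (nat \<Rightarrow> nat \<Rightarrow> bool) \<Rightarrow> nat \<Rightarrow> nat \<Rightarrow> nat" where
  "hamming L s m i = card {l\<in>{0..<L}. s m l \<noteq> s i l}"

lemma hamming_commute: "hamming L s m i = hamming L s i m"
  unfolding hamming_def by metis

lemma delta_eq_hamming: "delta L s m i = real (hamming L s m i) / real L"
proof -
  have "(\<Sum>l<L. if s m l \<noteq> s i l then 1 else 0 :: real) = real (hamming L s m i)"
    unfolding hamming_def by (simp add: sum.If_cases lessThan_atLeast0 Int_def)
  then show ?thesis
    unfolding delta_def by simp
qed

lemma alpha_eq_hamming_sum:
  "alpha L t s m = real (\<Sum>i\<in>{0..t} - {m}. hamming L s m i) / (real t * real L)"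
  unfolding alpha_def delta_eq_hamming of_nat_sum
  by (simp add: sum_divide_distrib[symmetric])

lemma hamming_triangle_strict:
  assumes "l\<^sub>0 < L" and "s a l\<^sub>0 \<noteq> s c l\<^sub>0" and "s b l\<^sub>0 \<noteq> s c l\<^sub>0"
  shows "hamming L s a b + 2 \<le> hamming L s a c + hamming L s c b"
proof -
  define D where "D x y = {l\<in>{0..<L}. s x l \<noteq> s y l}" for x y
  have finite_D: "finite (D x y)" for x y
    by (simp add: D_def)
  have "D a b \<subseteq> (D a c - {l\<^sub>0}) \<union> (D c b - {l\<^sub>0})"
    using assms(2,3) unfolding D_def by auto
  then have "card (D a b) \<le> card (D a c - {l\<^sub>0} \<union> (D c b - {l\<^sub>0}))"
    by (rule card_mono[rotated]) (simp add: finite_D)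
  also have "\<dots> \<le> card (D a c - {l\<^sub>0}) + card (D c b - {l\<^sub>0})"
    by (rule card_Un_le)
  finally have "card (D a b) \<le> card (D a c - {l\<^sub>0}) + card (D c b - {l\<^sub>0})" .
  moreover have "l\<^sub>0 \<in> D a c" and "l\<^sub>0 \<in> D c b"
    using assms unfolding D_def by auto
  then have "Suc (card (D a c - {l\<^sub>0})) = card (D a c)"
    and "Suc (card (D c b - {l\<^sub>0})) = card (D c b)"
    by (simp_all only: card_Suc_Diff1 finite_D)
  ultimately have "card (D a b) + 2 \<le> card (D a c) + card (D c b)"
    by linarith
  then show ?thesis
    unfolding hamming_def D_def .
qed

lemma mu_min_eq_0_obtains_unseen_value:
  assumes "L \<ge> 1" and "mu_min L t s = 0"
  obtains l where "l < L" and "\<forall>j<t. s j l \<noteq> s t l"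
proof -
  let ?mu = "\<lambda>l. (1 / real t) * real (card {j\<in>{0..<t}. s j l = s t l})"
  have "mu_min L t s \<in> ?mu ` {0..<L}"
    unfolding mu_min_def using assms(1) by (intro Min_in) auto
  then obtain l where "l < L" and "?mu l = 0"
    using assms(2) by auto
  have "\<forall>j<t. s j l \<noteq> s t l"
  proof (cases "t = 0")
    case False
    with \<open>?mu l = 0\<close> have "{j\<in>{0..<t}. s j l = s t l} = {}"
      by simp
    then show ?thesis
      by auto
  qed simp
  with \<open>l < L\<close> show thesis
    by (rule that)
qed

lemma hamming_sum_parent_le_child:
  assumes "k < t" and "l\<^sub>0 < L" and "\<forall>j<t. s j l\<^sub>0 \<noteq> s t l\<^sub>0"
  shows "(\<Sum>i\<in>{0..t} - {k}. hamming L s k i) + 2 * (t - 1)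
    \<le> (t - 1) * hamming L s k t + (\<Sum>i\<in>{0..t} - {t}. hamming L s t i)"
proof -
  define I where "I = {..<t} - {k}"
  have "{0..t} - {k} = insert t I" and "{0..t} - {t} = insert k I"
    and "finite I" and "t \<notin> I" and "k \<notin> I" and "card I = t - 1"
    using assms(1) unfolding I_def by auto
  have "(\<Sum>i\<in>I. hamming L s k i + 2) \<le> (\<Sum>i\<in>I. hamming L s k t + hamming L s t i)"
    using assms unfolding I_def by (intro sum_mono hamming_triangle_strict) auto
  also have "(\<Sum>i\<in>I. hamming L s k t + hamming L s t i)
      = (t - 1) * hamming L s k t + (\<Sum>i\<in>I. hamming L s t i)"
    using \<open>card I = t - 1\<close> by (simp add: sum.distrib)
  also have "(\<Sum>i\<in>I. hamming L s k i + 2) = (\<Sum>i\<in>I. hamming L s k i) + 2 * (t - 1)"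
    using \<open>card I = t - 1\<close> unfolding sum.distrib by simp
  finally have "(\<Sum>i\<in>I. hamming L s k i) + 2 * (t - 1)
      \<le> (t - 1) * hamming L s k t + (\<Sum>i\<in>I. hamming L s t i)" .
  then show ?thesis
    unfolding \<open>{0..t} - {k} = insert t I\<close> \<open>{0..t} - {t} = insert k I\<close>
    using \<open>finite I\<close> \<open>t \<notin> I\<close> \<open>k \<notin> I\<close> by (simp add: hamming_commute[of L s t k])
qed

theorem theorem6:
  fixes L t k e :: nat and s :: "nat \<Rightarrow> nat \<Rightarrow> bool"
  assumes "L \<ge> 1" and "t \<ge> 1" and "k < t"
    and "e = card {l\<in>{0..<L}. s k l \<noteq> s t l}"
    and "mu_min L t s = 0"
  shows "alpha L t s t \<ge> alpha L t s k - (real t - 1) / real t * ((real e - 2) / real L)"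
proof -
  obtain l\<^sub>0 where "l\<^sub>0 < L" and "\<forall>j<t. s j l\<^sub>0 \<noteq> s t l\<^sub>0"
    using mu_min_eq_0_obtains_unseen_value assms(1,5) by blast
  define S\<^sub>k where "S\<^sub>k = (\<Sum>i\<in>{0..t} - {k}. hamming L s k i)"
  define S\<^sub>t where "S\<^sub>t = (\<Sum>i\<in>{0..t} - {t}. hamming L s t i)"
  have "e = hamming L s k t"
    using assms(4) unfolding hamming_def .
  with hamming_sum_parent_le_child[where s = s, OF assms(3) \<open>l\<^sub>0 < L\<close> \<open>\<forall>j<t. _\<close>]
  have "real (S\<^sub>k + 2 * (t - 1)) \<le> real ((t - 1) * e + S\<^sub>t)"
    unfolding S\<^sub>k_def S\<^sub>t_def by (simp only: of_nat_le_iff)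
  then have "real S\<^sub>k + 2 * (real t - 1) \<le> (real t - 1) * real e + real S\<^sub>t"
    using assms(2) by (simp add: of_nat_diff)
  moreover have "real t * real L > 0"
    using assms(1,2) by simp
  ultimately have "(real S\<^sub>k - (real t - 1) * (real e - 2)) / (real t * real L)
      \<le> real S\<^sub>t / (real t * real L)"
    by (intro divide_right_mono) (auto simp: algebra_simps)
  moreover have "(real S\<^sub>k - (real t - 1) * (real e - 2)) / (real t * real L)
      = alpha L t s k - (real t - 1) / real t * ((real e - 2) / real L)"
    unfolding alpha_eq_hamming_sum S\<^sub>k_def[symmetric] times_divide_times_eq
    by (rule diff_divide_distrib)
  ultimately show ?thesis
    unfolding alpha_eq_hamming_sum S\<^sub>t_def by simp
qed

end
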